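(* Let $\varphi$ be a closed recHML formula. If there is a reactive monitor (possibly containing $\otimes,\oplus$) that is sound and violation-complete (resp. satisfaction-complete) for $\varphi$ over finfinite traces, then there is some $\psi\in\mathrm{sHML}$ (resp. $\psi\in\mathrm{cHML}$) with $[\![\psi]\!]_F=[\![\varphi]\!]_F$.
   Context: Fix a finite set $\mathrm{Act}$ of actions, $\tau\notin\mathrm{Act}$. recHML formulae: $\varphi::=\mathrm{tt}\mid\mathrm{ff}\mid\varphi\vee\varphi\mid\varphi\wedge\varphi\mid\langle A\rangle\varphi\mid[A]\varphi\mid\min X.\varphi\mid\max X.\varphi\mid X$ ($A\subseteq\mathrm{Act}$), guarded. $\mathrm{sHML}$: $\varphi::=\mathrm{tt}\mid\mathrm{ff}\mid[A]\varphi\mid\varphi\wedge\varphi\mid\max X.\varphi\mid X$; $\mathrm{cHML}$: $\varphi::=\mathrm{tt}\mid\mathrm{ff}\mid\langle A\rangle\varphi\mid\varphi\vee\varphi\mid\min X.\varphi\mid X$. Finfinite traces $\mathrm{Fin}=\mathrm{Act}^\omega\cup\mathrm{Act}^*$; finfinite semantics: $[\![\mathrm{tt}]\!]_F=\mathrm{Fin}$, $[\![\mathrm{ff}]\!]_F=\emptyset$, $\vee,\wedge$ union/intersection, $[\![\langle A\rangle\varphi,\sigma]\!]_F=\{ag\mid a\in A,g\in[\![\varphi,\sigma]\!]_F\}$, $[\![[A]\varphi,\sigma]\!]_F=\{g\mid\forall a\in A,\forall g'.\ g=ag'\Rightarrow g'\in[\![\varphi,\sigma]\!]_F\}$, $\min/\max$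 as least/greatest fixpoints, $[\![X,\sigma]\!]_F=\sigma(X)$. Monitors: $m,n::=v\mid a.m\mid m+n\mid\mathrm{rec}\,x.m\mid x\mid m\otimes n\mid m\oplus n$, verdicts $v::=\mathrm{end}\mid\mathrm{no}\mid\mathrm{yes}$, transitions ($\mu\in\mathrm{Act}\cup\{\tau\}$, $a\in\mathrm{Act}$, $\odot\in\{\otimes,\oplus\}$): $a.m\xrightarrow{a}m$; $\mathrm{rec}\,x.m\xrightarrow{\tau}m[\mathrm{rec}\,x.m/x]$; if $m\xrightarrow{\mu}m'$ then $m+n\xrightarrow{\mu}m'$ and $n+m\xrightarrow{\mu}m'$; $v\xrightarrow{a}v$; if $m\xrightarrow{a}m'$ and $n\xrightarrow{a}n'$ then $m\odot n\xrightarrow{a}m'\odot n'$; if $m\xrightarrow{\tau}m'$ then $m\odot n\xrightarrow{\tau}m'\odot n$ and $n\odot m\xrightarrow{\tau}n\odot m'$; $\mathrm{end}\odot\mathrm{end}\xrightarrow{\tau}\mathrm{end}$; $\mathrm{yes}\otimes m\xrightarrow{\tau}m$, $\mathrm{no}\otimes m\xrightarrow{\tau}\mathrm{no}$, $\mathrm{no}\oplus m\xrightarrow{\tau}m$, $\mathrm{yes}\oplus m\xrightarrow{\tau}\mathrm{yes}$, and symmetric versions. Weak transitions as usual. A monitor is reactive if every state reachable from it can weakly perform every $a\in\mathrm{Act}$. $m$ rejects (accepts) $s\in\mathrm{Act}^*$ iff $m\overset{s}{\Longrightarrow}\mathrm{no}$ ($\mathrm{yes}$), and rejects (accepts) $g\in\mathrm{Fin}$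 iff it rejects (accepts) some finite prefix of $g$. $m$ is sound for $\varphi$ over finfinite traces if for all $g\in\mathrm{Fin}$, rejecting $g$ implies $g\notin[\![\varphi]\!]_F$ and accepting $g$ implies $g\in[\![\varphi]\!]_F$; violation-complete if $g\notin[\![\varphi]\!]_F$ implies $m$ rejects $g$; satisfaction-complete if $g\in[\![\varphi]\!]_F$ implies $m$ accepts $g$. *)

theory Defs
  imports Main
begin

datatype 'a ftrace = FinT "'a list" | InfT "nat \<Rightarrow> 'a"

fun tcons :: "'a \<Rightarrow> 'a ftrace \<Rightarrow> 'a ftrace" where
  "tcons a (FinT l) = FinT (a # l)"
| "tcons a (InfT f) = InfT (case_nat a f)"

definition tapp :: "'a list \<Rightarrow> 'a ftrace \<Rightarrow> 'a ftrace" where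
  "tapp s g = foldr tcons s g"

definition tprefix :: "'a list \<Rightarrow> 'a ftrace \<Rightarrow> bool" where
  "tprefix s g \<longleftrightarrow> (\<exists>g'. g = tapp s g')"

type_synonym var = nat

datatype 'a form =
    TT | FF
  | Or "'a form" "'a form"
  | And "'a form" "'a form"
  | Dia "'a set" "'a form"
  | Box "'a set" "'a form"
  | Min var "'a form"
  | Max var "'a form"
  | FVar var

fun fv :: "'a form \<Rightarrow> var set" where
  "fv TT = {}" | "fv FF = {}"
| "fv (Or p q) = fv p \<union> fv q" | "fv (And p q) = fv p \<union> fv q"
| "fv (Dia A p) = fv p" | "fv (Box A p) = fv p"
| "fv (Min x p) = fv p - {x}" | "fv (Max x p) = fv p - {x}"
| "fv (FVar x) = {x}"

definition closed_form :: "'a form \<Rightarrow> bool" where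
  "closed_form p \<longleftrightarrow> fv p = {}"

text \<open>guarded_in S p: no variable of S (bound by an enclosing fixpoint without an
  intervening modality) occurs unguarded in p\<close>
fun guarded_in :: "var set \<Rightarrow> 'a form \<Rightarrow> bool" where
  "guarded_in S TT = True" | "guarded_in S FF = True"
| "guarded_in S (Or p q) = (guarded_in S p \<and> guarded_in S q)"
| "guarded_in S (And p q) = (guarded_in S p \<and> guarded_in S q)"
| "guarded_in S (Dia A p) = guarded_in {} p"
| "guarded_in S (Box A p) = guarded_in {} p"
| "guarded_in S (Min x p) = guarded_in (insert x S) p"
| "guarded_in S (Max x p) = guarded_in (insert x S) p"
| "guarded_in S (FVar x) = (x \<notin> S)"

definition guarded :: "'a form \<Rightarrow> bool" where
  "guarded p \<longleftrightarrow> guarded_in {} p"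

fun is_sHML :: "'a form \<Rightarrow> bool" where
  "is_sHML TT = True" | "is_sHML FF = True"
| "is_sHML (Box A p) = is_sHML p"
| "is_sHML (And p q) = (is_sHML p \<and> is_sHML q)"
| "is_sHML (Max x p) = is_sHML p"
| "is_sHML (FVar x) = True"
| "is_sHML _ = False"

fun is_cHML :: "'a form \<Rightarrow> bool" where
  "is_cHML TT = True" | "is_cHML FF = True"
| "is_cHML (Dia A p) = is_cHML p"
| "is_cHML (Or p q) = (is_cHML p \<and> is_cHML q)"
| "is_cHML (Min x p) = is_cHML p"
| "is_cHML (FVar x) = True"
| "is_cHML _ = False"

fun semF :: "'a form \<Rightarrow> (var \<Rightarrow> 'a ftrace set) \<Rightarrow> 'a ftrace set" where
  "semF TT \<sigma> = UNIV"
| "semF FF \<sigma> = {}"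
| "semF (Or p q) \<sigma> = semF p \<sigma> \<union> semF q \<sigma>"
| "semF (And p q) \<sigma> = semF p \<sigma> \<inter> semF q \<sigma>"
| "semF (Dia A p) \<sigma> = {tcons a g | a g. a \<in> A \<and> g \<in> semF p \<sigma>}"
| "semF (Box A p) \<sigma> = {g. \<forall>a\<in>A. \<forall>g'. g = tcons a g' \<longrightarrow> g' \<in> semF p \<sigma>}"
| "semF (Min x p) \<sigma> = lfp (\<lambda>S. semF p (\<sigma>(x := S)))"
| "semF (Max x p) \<sigma> = gfp (\<lambda>S. semF p (\<sigma>(x := S)))"
| "semF (FVar x) \<sigma> = \<sigma> x"

text \<open>semantics of a closed formula (environment irrelevant)\<close>
definition semC :: "'a form \<Rightarrow> 'a ftrace set" where
  "semC p = semF p (\<lambda>_. {})"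

datatype verdict = End | No | Yes
datatype parop = OTimes | OPlus

datatype 'a mon =
    V verdict
  | Pre 'a "'a mon"
  | Sum "'a mon" "'a mon"
  | Rec var "'a mon"
  | MVar var
  | Par parop "'a mon" "'a mon"

fun mfv :: "'a mon \<Rightarrow> var set" where
  "mfv (V v) = {}" | "mfv (Pre a m) = mfv m"
| "mfv (Sum m n) = mfv m \<union> mfv n" | "mfv (Rec x m) = mfv m - {x}"
| "mfv (MVar x) = {x}" | "mfv (Par o' m n) = mfv m \<union> mfv n"

definition closed_mon :: "'a mon \<Rightarrow> bool" where
  "closed_mon m \<longleftrightarrow> mfv m = {}"

text \<open>msubst m x n = m[n/x]\<close>
fun msubst :: "'a mon \<Rightarrow> var \<Rightarrow> 'a mon \<Rightarrow> 'a mon" where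
  "msubst (V v) x n = V v"
| "msubst (Pre a m) x n = Pre a (msubst m x n)"
| "msubst (Sum m1 m2) x n = Sum (msubst m1 x n) (msubst m2 x n)"
| "msubst (Rec y m) x n = (if y = x then Rec y m else Rec y (msubst m x n))"
| "msubst (MVar y) x n = (if y = x then n else MVar y)"
| "msubst (Par o' m1 m2) x n = Par o' (msubst m1 x n) (msubst m2 x n)"

text \<open>labels: Some a for an action, None for tau\<close>
inductive step :: "'a mon \<Rightarrow> 'a option \<Rightarrow> 'a mon \<Rightarrow> bool" where
  sPre: "step (Pre a m) (Some a) m"
| sRec: "step (Rec x m) None (msubst m x (Rec x m))"
| sSumL: "step m \<mu> m' \<Longrightarrow> step (Sum m n) \<mu> m'"
| sSumR: "step m \<mu> m' \<Longrightarrow> step (Sum n m) \<mu> m'"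
| sVerd: "step (V v) (Some a) (V v)"
| sPar: "step m (Some a) m' \<Longrightarrow> step n (Some a) n' \<Longrightarrow> step (Par o' m n) (Some a) (Par o' m' n')"
| sParTL: "step m None m' \<Longrightarrow> step (Par o' m n) None (Par o' m' n)"
| sParTR: "step m None m' \<Longrightarrow> step (Par o' n m) None (Par o' n m')"
| sEnd: "step (Par o' (V End) (V End)) None (V End)"
| sYesT1: "step (Par OTimes (V Yes) m) None m"
| sYesT2: "step (Par OTimes m (V Yes)) None m"
| sNoT1: "step (Par OTimes (V No) m) None (V No)"
| sNoT2: "step (Par OTimes m (V No)) None (V No)"
| sNoP1: "step (Par OPlus (V No) m) None m"
| sNoP2: "step (Par OPlus m (V No)) None m"
| sYesP1: "step (Par OPlus (V Yes) m) None (V Yes)"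
| sYesP2: "step (Par OPlus m (V Yes)) None (V Yes)"

inductive wtrans :: "'a mon \<Rightarrow> 'a list \<Rightarrow> 'a mon \<Rightarrow> bool" where
  wRefl: "wtrans m [] m"
| wTau: "step m None m' \<Longrightarrow> wtrans m' s m'' \<Longrightarrow> wtrans m s m''"
| wAct: "step m (Some a) m' \<Longrightarrow> wtrans m' s m'' \<Longrightarrow> wtrans m (a # s) m''"

definition reachable :: "'a mon \<Rightarrow> 'a mon \<Rightarrow> bool" where
  "reachable m m' \<longleftrightarrow> (\<exists>s. wtrans m s m')"

definition reactive :: "'a mon \<Rightarrow> bool" where
  "reactive m \<longleftrightarrow> (\<forall>m'. reachable m m' \<longrightarrow> (\<forall>a. \<exists>m''. wtrans m' [a] m''))"

definition rejects :: "'a mon \<Rightarrow> 'a ftrace \<Rightarrow> bool" where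
  "rejects m g \<longleftrightarrow> (\<exists>s. tprefix s g \<and> wtrans m s (V No))"

definition accepts :: "'a mon \<Rightarrow> 'a ftrace \<Rightarrow> bool" where
  "accepts m g \<longleftrightarrow> (\<exists>s. tprefix s g \<and> wtrans m s (V Yes))"

definition sound :: "'a mon \<Rightarrow> 'a form \<Rightarrow> bool" where
  "sound m p \<longleftrightarrow> (\<forall>g. (rejects m g \<longrightarrow> g \<notin> semC p) \<and> (accepts m g \<longrightarrow> g \<in> semC p))"

definition viol_complete :: "'a mon \<Rightarrow> 'a form \<Rightarrow> bool" where
  "viol_complete m p \<longleftrightarrow> (\<forall>g. g \<notin> semC p \<longrightarrow> rejects m g)"

definition sat_complete :: "'a mon \<Rightarrow> 'a form \<Rightarrow> bool" where
  "sat_complete m p \<longleftrightarrow> (\<forall>g. g \<in> semC p \<longrightarrow> accepts m g)"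

end

theory Submission
  imports Defs
begin

text \<open>A monitor that is sound and violation-complete rejects each violating trace at some
  finite prefix, and by soundness every extension of that prefix violates the formula too: the
  property is a safety property.
  The semantics of a guarded formula has only finitely many residuals: the residuals of its
  subformula occurrences, read with the enclosing fixpoints unfolded, stay inside the finite
  lattice generated by these occurrences.
  A safety property with finitely many residuals is the greatest solution of the equations
  X(R) = \<And>a. [{a}] X(residual a R), with X({}) = ff, and nesting these
  equations into greatest fixpoints yields an sHML formula. The satisfaction case is the
  violation case for the complement, followed by dualising the formula into cHML.\<close>

lemma tcons_eq_iff [simp]: "tcons a g = tcons b h \<longleftrightarrow> a = b \<and> g = h"
  by (cases g; cases h) (auto simp: fun_eq_iff split: nat.splits)

lemma tapp_Nil [simp]: "tapp [] g = g"
  and tapp_Cons [simp]: "tapp (a # s) g = tcons a (tapp s g)"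
  by (simp_all add: tapp_def)

lemma tprefix_tapp [simp]: "tprefix s (tapp s h)"
  by (auto simp: tprefix_def)

lemma tprefix_Cons_iff: "tprefix (a # s) g \<longleftrightarrow> (\<exists>g'. g = tcons a g' \<and> tprefix s g')"
  by (auto simp: tprefix_def)

definition residual :: "'a \<Rightarrow> 'a ftrace set \<Rightarrow> 'a ftrace set" where
  "residual a L = {g. tcons a g \<in> L}"

lemma residual_Compl: "residual a (- L) = - residual a L"
  by (auto simp: residual_def)

lemma residual_Un: "residual a (X \<union> Y) = residual a X \<union> residual a Y"
  and residual_Int: "residual a (X \<inter> Y) = residual a X \<inter> residual a Y"
  by (auto simp: residual_def)

section \<open>Safety properties\<close>

definition safety :: "'a ftrace set \<Rightarrow> bool" where
  "safety L \<longleftrightarrow> (\<forall>g. g \<notin> L \<longrightarrow> (\<exists>s. tprefix s g \<and> (\<forall>h. tapp s h \<notin> L)))"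

lemma safety_if_sound_viol_complete:
  assumes "sound m \<phi>" and "viol_complete m \<phi>"
  shows "safety (semC \<phi>)"
  using assms unfolding safety_def sound_def viol_complete_def rejects_def
  by (meson tprefix_tapp)

lemma safety_Compl_if_sound_sat_complete:
  assumes "sound m \<phi>" and "sat_complete m \<phi>"
  shows "safety (- semC \<phi>)"
  using assms unfolding safety_def sound_def sat_complete_def accepts_def
  by (meson ComplD ComplI tprefix_tapp)

definition prefix_approx :: "nat \<Rightarrow> 'a ftrace set \<Rightarrow> 'a ftrace set" where
  "prefix_approx k R = {g. \<forall>s. length s < k \<longrightarrow> tprefix s g \<longrightarrow> (\<exists>h. tapp s h \<in> R)}"

lemma prefix_approx_0 [simp]: "prefix_approx 0 R = UNIV"
  by (simp add: prefix_approx_def)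

lemma prefix_approx_antimono: "j \<le> k \<Longrightarrow> prefix_approx k R \<subseteq> prefix_approx j R"
  by (auto simp: prefix_approx_def)

lemma prefix_approx_SucI:
  assumes "R \<noteq> {}" and "\<And>a g'. g = tcons a g' \<Longrightarrow> g' \<in> prefix_approx k (residual a R)"
  shows "g \<in> prefix_approx (Suc k) R"
  unfolding prefix_approx_def
proof (intro CollectI allI impI)
  fix s assume s: "length s < Suc k" "tprefix s g"
  show "\<exists>h. tapp s h \<in> R"
  proof (cases s)
    case Nil
    then show ?thesis using assms(1) by auto
  next
    case (Cons a s')
    with s obtain g' where "g = tcons a g'" and "tprefix s' g'" and "length s' < k"
      by (auto simp: tprefix_Cons_iff)
    with assms(2) obtain h where "tapp s' h \<in> residual a R"
      by (fastforce simp: prefix_approx_def)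
    then show ?thesis
      by (auto simp: residual_def Cons)
  qed
qed

lemma safety_INT_prefix_approx:
  assumes "safety L"
  shows "(\<Inter>k. prefix_approx k L) \<subseteq> L"
proof
  fix g assume g: "g \<in> (\<Inter>k. prefix_approx k L)"
  show "g \<in> L"
  proof (rule ccontr)
    assume "g \<notin> L"
    then obtain s where "tprefix s g" and "\<forall>h. tapp s h \<notin> L"
      using assms by (auto simp: safety_def)
    moreover have "g \<in> prefix_approx (Suc (length s)) L"
      using g by blast
    ultimately show False
      by (auto simp: prefix_approx_def)
  qed
qed

section \<open>Monotonicity and duality\<close>

lemma semF_mono: "(\<And>x. \<sigma> x \<subseteq> \<sigma>' x) \<Longrightarrow> semF p \<sigma> \<subseteq> semF p \<sigma>'"
proof (induction p arbitrary: \<sigma> \<sigma>')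
  case (Min x p)
  then have "semF p (\<sigma>(x := S)) \<subseteq> semF p (\<sigma>'(x := S))" for S
    by (intro Min.IH) auto
  then show ?case by (simp add: lfp_mono)
next
  case (Max x p)
  then have "semF p (\<sigma>(x := S)) \<subseteq> semF p (\<sigma>'(x := S))" for S
    by (intro Max.IH) auto
  then show ?case by (simp add: gfp_mono)
next
  case (Dia A p)
  then have "semF p \<sigma> \<subseteq> semF p \<sigma>'" by blast
  then show ?case by auto
next
  case (Box A p)
  then have "semF p \<sigma> \<subseteq> semF p \<sigma>'" by blast
  then show ?case by auto
next
  case (Or p q)
  then show ?case by (metis semF.simps(3) Un_mono)
next
  case (And p q)
  then show ?case by (metis semF.simps(4) Int_mono)
qed simp_all

lemma mono_semF_upd: "mono (\<lambda>S. semF p (\<sigma>(x := S)))"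
  by (intro monoI semF_mono) auto

lemma semF_fixpoint_unfold:
  "semF (Min x p) \<sigma> = semF p (\<sigma>(x := semF (Min x p) \<sigma>))"
  "semF (Max x p) \<sigma> = semF p (\<sigma>(x := semF (Max x p) \<sigma>))"
  using lfp_unfold[OF mono_semF_upd] gfp_unfold[OF mono_semF_upd] by simp_all

lemma semF_cong: "(\<And>x. x \<in> fv p \<Longrightarrow> \<sigma> x = \<sigma>' x) \<Longrightarrow> semF p \<sigma> = semF p \<sigma>'"
proof (induction p arbitrary: \<sigma> \<sigma>')
  case (Min x p)
  then have "semF p (\<sigma>(x := S)) = semF p (\<sigma>'(x := S))" for S
    by (intro Min.IH) auto
  then show ?case by simp
next
  case (Max x p)
  then have "semF p (\<sigma>(x := S)) = semF p (\<sigma>'(x := S))" for S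
    by (intro Max.IH) auto
  then show ?case by simp
next
  case (Or p q)
  have "semF p \<sigma> = semF p \<sigma>'" "semF q \<sigma> = semF q \<sigma>'"
    using Or.prems by (intro Or.IH; simp)+
  then show ?case by simp
next
  case (And p q)
  have "semF p \<sigma> = semF p \<sigma>'" "semF q \<sigma> = semF q \<sigma>'"
    using And.prems by (intro And.IH; simp)+
  then show ?case by simp
next
  case (Dia A p)
  have "semF p \<sigma> = semF p \<sigma>'"
    using Dia.prems by (intro Dia.IH) simp
  then show ?case by simp
next
  case (Box A p)
  have "semF p \<sigma> = semF p \<sigma>'"
    using Box.prems by (intro Box.IH) simp
  then show ?case by simp
qed simp_all

lemma semC_eq_semF_if_closed: "closed_form p \<Longrightarrow> semC p = semF p \<sigma>"
  unfolding semC_def closed_form_def by (rule semF_cong) simp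

lemma lfp_Compl_conj:
  assumes "mono (f :: 'b set \<Rightarrow> 'b set)"
  shows "lfp (\<lambda>S. - f (- S)) = - gfp f"
proof (rule antisym)
  show "lfp (\<lambda>S. - f (- S)) \<subseteq> - gfp f"
    by (rule lfp_lowerbound) (simp flip: gfp_unfold[OF assms])
  have "mono (\<lambda>S. - f (- S))"
    using assms by (auto simp: mono_def)
  then have "lfp (\<lambda>S. - f (- S)) = - f (- lfp (\<lambda>S. - f (- S)))"
    by (rule lfp_unfold)
  then have "- lfp (\<lambda>S. - f (- S)) \<subseteq> f (- lfp (\<lambda>S. - f (- S)))"
    by (metis double_compl order_refl)
  then show "- gfp f \<subseteq> lfp (\<lambda>S. - f (- S))"
    using gfp_upperbound by blast
qed

lemma gfp_Compl_conj:
  assumes "mono (f :: 'b set \<Rightarrow> 'b set)"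
  shows "gfp (\<lambda>S. - f (- S)) = - lfp f"
proof -
  have "mono (\<lambda>S. - f (- S))"
    using assms by (auto simp: mono_def)
  from lfp_Compl_conj[OF this] show ?thesis by simp
qed

fun dual :: "'a form \<Rightarrow> 'a form" where
  "dual TT = FF" | "dual FF = TT"
| "dual (Or p q) = And (dual p) (dual q)" | "dual (And p q) = Or (dual p) (dual q)"
| "dual (Dia A p) = Box A (dual p)" | "dual (Box A p) = Dia A (dual p)"
| "dual (Min x p) = Max x (dual p)" | "dual (Max x p) = Min x (dual p)"
| "dual (FVar x) = FVar x"

lemma fv_dual [simp]: "fv (dual p) = fv p"
  by (induction p) auto

lemma guarded_in_dual [simp]: "guarded_in S (dual p) = guarded_in S p"
  by (induction p arbitrary: S) auto

lemma is_cHML_dual: "is_sHML p \<Longrightarrow> is_cHML (dual p)"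
  by (induction p) auto

lemma semF_dual: "semF (dual p) \<sigma> = - semF p (\<lambda>x. - \<sigma> x)"
proof (induction p arbitrary: \<sigma>)
  case (Dia A p)
  then show ?case by (simp only: dual.simps semF.simps) blast
next
  case (Box A p)
  then show ?case by (simp only: dual.simps semF.simps) blast
next
  case (Min x p)
  have "(\<lambda>y. - (\<sigma>(x := S)) y) = (\<lambda>y. - \<sigma> y)(x := - S)" for S
    by (rule ext) simp
  then show ?case
    using gfp_Compl_conj[OF mono_semF_upd, of p "\<lambda>y. - \<sigma> y" x] by (simp add: Min.IH)
next
  case (Max x p)
  have "(\<lambda>y. - (\<sigma>(x := S)) y) = (\<lambda>y. - \<sigma> y)(x := - S)" for S
    by (rule ext) simp
  then show ?case
    using lfp_Compl_conj[OF mono_semF_upd, of p "\<lambda>y. - \<sigma> y" x] by (simp add: Max.IH)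
qed auto

lemma semC_dual:
  assumes "closed_form p"
  shows "semC (dual p) = - semC p"
proof -
  have "semC (dual p) = - semF p (\<lambda>_. UNIV)"
    by (simp add: semC_def semF_dual)
  also have "semF p (\<lambda>_. UNIV) = semC p"
    using semC_eq_semF_if_closed[OF assms] by simp
  finally show ?thesis .
qed

section \<open>Characteristic sHML formulas\<close>

definition all_actions :: "'a::finite list" where
  "all_actions = (SOME xs. set xs = UNIV)"

lemma set_all_actions [simp]: "set (all_actions :: 'a::finite list) = UNIV"
  unfolding all_actions_def by (rule someI_ex) (rule finite_list[OF finite_UNIV])

definition Ands :: "'a form list \<Rightarrow> 'a form" where
  "Ands ps = foldr And ps TT"

lemma semF_Ands: "semF (Ands ps) \<sigma> = (\<Inter>p\<in>set ps. semF p \<sigma>)"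
  by (induction ps) (auto simp: Ands_def)

lemma is_sHML_Ands [simp]: "is_sHML (Ands ps) \<longleftrightarrow> (\<forall>p\<in>set ps. is_sHML p)"
  by (induction ps) (auto simp: Ands_def)

lemma guarded_in_Ands [simp]: "guarded_in S (Ands ps) \<longleftrightarrow> (\<forall>p\<in>set ps. guarded_in S p)"
  by (induction ps) (auto simp: Ands_def)

lemma fv_Ands [simp]: "fv (Ands ps) = (\<Union>p\<in>set ps. fv p)"
  by (induction ps) (auto simp: Ands_def)

locale residual_closed_family =
  fixes Rs :: "'a::finite ftrace set set" and idx :: "'a ftrace set \<Rightarrow> var"
  assumes finite_Rs: "finite Rs"
    and inj_idx: "inj_on idx Rs"
    and residual_closed: "\<And>R a. R \<in> Rs \<Longrightarrow> residual a R \<in> Rs"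
begin

text \<open>The equations X(R) = \<And>a. [{a}] X(residual a R) unfolded into nested greatest
  fixpoints; U holds the residuals already bound on the current path. The test R \<notin> Rs only
  serves termination.\<close>
function char_form :: "'a ftrace set \<Rightarrow> 'a ftrace set set \<Rightarrow> 'a form" where
  "char_form R U =
    (if R = {} \<or> R \<notin> Rs then FF
     else if R \<in> U then FVar (idx R)
     else Max (idx R) (Ands (map (\<lambda>a. Box {a} (char_form (residual a R) (insert R U))) all_actions)))"
  by auto
termination
proof (relation "measure (\<lambda>(R, U). card (Rs - U))")
  fix R U and a :: 'a
  assume "\<not> (R = {} \<or> R \<notin> Rs)" and "R \<notin> U"
  then have "Rs - insert R U \<subset> Rs - U"
    by blast
  then show "((residual a R, insert R U), R, U) \<in> measure (\<lambda>(R, U). card (Rs - U))"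
    using finite_Rs by (simp add: psubset_card_mono)
qed auto

declare char_form.simps [simp del]

lemma is_sHML_char_form: "is_sHML (char_form R U)"
  by (induction R U rule: char_form.induct) (subst char_form.simps, auto)

lemma guarded_char_form: "guarded_in {} (char_form R U)"
  by (induction R U rule: char_form.induct) (subst char_form.simps, auto)

lemma fv_char_form: "fv (char_form R U) \<subseteq> idx ` U"
  by (induction R U rule: char_form.induct) (subst char_form.simps, auto)

lemma idx_eq_idx_iff:
  assumes "Q \<in> insert R U" and "R \<in> Rs" and "U \<subseteq> Rs"
  shows "idx Q = idx R \<longleftrightarrow> Q = R"
  using assms inj_idx by (auto dest: inj_onD)

lemma char_form_lower:
  "R \<in> Rs \<Longrightarrow> U \<subseteq> Rs \<Longrightarrow> (\<And>Q. Q \<in> U \<Longrightarrow> Q \<subseteq> \<sigma> (idx Q)) \<Longrightarrow> R \<subseteq> semF (char_form R U) \<sigma>"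
proof (induction R U arbitrary: \<sigma> rule: char_form.induct)
  case (1 R U)
  show ?case
  proof (cases "R = {} \<or> R \<in> U")
    case True
    with "1.prems" show ?thesis
      by (subst char_form.simps) auto
  next
    case False
    define body where
      "body = Ands (map (\<lambda>a. Box {a} (char_form (residual a R) (insert R U))) all_actions)"
    have "Q \<subseteq> (\<sigma>(idx R := R)) (idx Q)" if "Q \<in> insert R U" for Q
      using that "1.prems" by (auto simp: idx_eq_idx_iff)
    with False "1.prems" have "residual a R \<subseteq> semF (char_form (residual a R) (insert R U)) (\<sigma>(idx R := R))" for a
      by (intro "1.IH") (auto intro: residual_closed)
    then have "R \<subseteq> semF body (\<sigma>(idx R := R))"
      by (auto simp: body_def semF_Ands residual_def)
    then have "R \<subseteq> semF (Max (idx R) body) \<sigma>"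
      by (simp add: gfp_upperbound)
    with False "1.prems" show ?thesis
      by (subst char_form.simps) (simp add: body_def)
  qed
qed

lemma char_form_upper:
  "U \<subseteq> Rs \<Longrightarrow> (\<And>Q. Q \<in> U \<Longrightarrow> \<sigma> (idx Q) \<subseteq> prefix_approx k Q)
    \<Longrightarrow> semF (char_form R U) \<sigma> \<subseteq> prefix_approx k R"
proof (induction R U arbitrary: \<sigma> k rule: char_form.induct)
  case (1 R U)
  show ?case
  proof (cases "R = {} \<or> R \<notin> Rs \<or> R \<in> U")
    case True
    with "1.prems" show ?thesis
      by (subst char_form.simps) auto
  next
    case False
    define body where
      "body = Ands (map (\<lambda>a. Box {a} (char_form (residual a R) (insert R U))) all_actions)"
    define G where "G = gfp (\<lambda>S. semF body (\<sigma>(idx R := S)))"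
    have G_unfold: "G = semF body (\<sigma>(idx R := G))"
      unfolding G_def by (rule gfp_unfold[OF mono_semF_upd])
    from "1.prems"(2) have "G \<subseteq> prefix_approx k R"
    proof (induction k)
      case (Suc k)
      then have \<sigma>_k: "\<sigma> (idx Q) \<subseteq> prefix_approx k Q" if "Q \<in> U" for Q
        using that prefix_approx_antimono[of k "Suc k"] by fastforce
      with Suc.IH have G_k: "G \<subseteq> prefix_approx k R"
        by blast
      have "(\<sigma>(idx R := G)) (idx Q) \<subseteq> prefix_approx k Q" if "Q \<in> insert R U" for Q
        using that False "1.prems"(1) G_k \<sigma>_k by (auto simp: idx_eq_idx_iff)
      with False "1.prems"(1) have
        "semF (char_form (residual a R) (insert R U)) (\<sigma>(idx R := G)) \<subseteq> prefix_approx k (residual a R)" for a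
        by (intro "1.IH") auto
      then show ?case
        using False by (subst G_unfold) (auto simp: body_def semF_Ands intro!: prefix_approx_SucI)
    qed simp
    with False show ?thesis
      by (subst char_form.simps) (simp add: G_def body_def)
  qed
qed

end

lemma sHML_if_safety_finite_residuals:
  fixes L :: "'a::finite ftrace set"
  assumes "finite Rs" and "L \<in> Rs" and "\<And>R a. R \<in> Rs \<Longrightarrow> residual a R \<in> Rs"
    and "safety L"
  shows "\<exists>\<psi>. is_sHML \<psi> \<and> closed_form \<psi> \<and> guarded \<psi> \<and> semC \<psi> = L"
proof -
  obtain idx :: "'a ftrace set \<Rightarrow> var" and N where "inj_on idx Rs"
    using finite_imp_inj_to_nat_seg[OF assms(1)] by blast
  then interpret residual_closed_family Rs idx
    using assms by unfold_locales
  let ?\<psi> = "char_form L {}"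
  have "closed_form ?\<psi>"
    using fv_char_form[of L "{}"] by (simp add: closed_form_def)
  moreover have "L \<subseteq> semC ?\<psi>"
    unfolding semC_def by (rule char_form_lower) (use assms in auto)
  moreover have "semC ?\<psi> \<subseteq> prefix_approx k L" for k
    unfolding semC_def by (rule char_form_upper) auto
  then have "semC ?\<psi> \<subseteq> L"
    using safety_INT_prefix_approx[OF assms(4)] by blast
  ultimately show ?thesis
    using is_sHML_char_form guarded_char_form unfolding guarded_def by blast
qed

section \<open>Finitely many residuals\<close>

definition lattice_span :: "'b set set \<Rightarrow> 'b set set" where
  "lattice_span B = (\<lambda>SS. \<Union> (Inter ` SS)) ` Pow (Pow B)"

lemma finite_lattice_span: "finite B \<Longrightarrow> finite (lattice_span B)"
  by (simp add: lattice_span_def)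

lemma lattice_span_base: "X \<in> B \<Longrightarrow> X \<in> lattice_span B"
  unfolding lattice_span_def by (rule image_eqI[of _ _ "{{X}}"]) auto

lemma empty_in_lattice_span: "{} \<in> lattice_span B"
  unfolding lattice_span_def by (rule image_eqI[of _ _ "{}"]) auto

lemma UNIV_in_lattice_span: "UNIV \<in> lattice_span B"
  unfolding lattice_span_def by (rule image_eqI[of _ _ "{{}}"]) auto

lemma Un_in_lattice_span:
  assumes "X \<in> lattice_span B" and "Y \<in> lattice_span B"
  shows "X \<union> Y \<in> lattice_span B"
proof -
  obtain SS1 SS2 where "SS1 \<subseteq> Pow B" "X = \<Union> (Inter ` SS1)" "SS2 \<subseteq> Pow B" "Y = \<Union> (Inter ` SS2)"
    using assms unfolding lattice_span_def by blast
  then show ?thesis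
    unfolding lattice_span_def by (intro image_eqI[of _ _ "SS1 \<union> SS2"]) auto
qed

lemma Int_in_lattice_span:
  assumes "X \<in> lattice_span B" and "Y \<in> lattice_span B"
  shows "X \<inter> Y \<in> lattice_span B"
proof -
  obtain SS1 SS2 where SS: "SS1 \<subseteq> Pow B" "X = \<Union> (Inter ` SS1)" "SS2 \<subseteq> Pow B" "Y = \<Union> (Inter ` SS2)"
    using assms unfolding lattice_span_def by blast
  let ?SS = "{T1 \<union> T2 | T1 T2. T1 \<in> SS1 \<and> T2 \<in> SS2}"
  have "X \<inter> Y = \<Union> (Inter ` ?SS)"
    using SS(2,4) by blast
  moreover have "?SS \<subseteq> Pow B"
    using SS(1,3) by blast
  ultimately show ?thesis
    unfolding lattice_span_def by blast
qed

lemma Inter_in_lattice_span: "finite T \<Longrightarrow> T \<subseteq> lattice_span B \<Longrightarrow> \<Inter> T \<in> lattice_span B"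
  by (induction T rule: finite_induct) (auto intro: UNIV_in_lattice_span Int_in_lattice_span)

lemma Union_in_lattice_span: "finite T \<Longrightarrow> T \<subseteq> lattice_span B \<Longrightarrow> \<Union> T \<in> lattice_span B"
  by (induction T rule: finite_induct) (auto intro: empty_in_lattice_span Un_in_lattice_span)

lemma residual_in_lattice_span:
  assumes "finite B" and "\<And>X. X \<in> B \<Longrightarrow> residual a X \<in> lattice_span B"
    and "Y \<in> lattice_span B"
  shows "residual a Y \<in> lattice_span B"
proof -
  obtain SS where SS: "SS \<subseteq> Pow B" "Y = \<Union> (Inter ` SS)"
    using assms(3) unfolding lattice_span_def by blast
  have "residual a Y = \<Union> ((\<lambda>T. \<Inter> (residual a ` T)) ` SS)"
    using SS(2) by (auto simp: residual_def)
  moreover have "finite SS" and "\<And>T. T \<in> SS \<Longrightarrow> finite T"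
    using SS(1) assms(1) by (auto intro: finite_subset)
  ultimately show ?thesis
    using SS(1) assms(2) by (fastforce intro!: Union_in_lattice_span Inter_in_lattice_span)
qed

lemma residual_Dia: "residual a (semF (Dia A p) \<sigma>) = (if a \<in> A then semF p \<sigma> else {})"
  by (auto simp: residual_def)

lemma residual_Box: "residual a (semF (Box A p) \<sigma>) = (if a \<in> A then semF p \<sigma> else UNIV)"
  by (auto simp: residual_def)

text \<open>A subformula occurrence is interpreted with each enclosing fixpoint variable bound to the
  fixpoint itself; this avoids substituting fixpoint formulas into their bodies.\<close>

type_synonym 'a binders = "(var \<times> 'a form) list"

fun binder_env :: "'a binders \<Rightarrow> var \<Rightarrow> 'a ftrace set" where
  "binder_env [] = (\<lambda>_. {})"
| "binder_env ((x, b) # c) = (binder_env c)(x := semF b (binder_env c))"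

fun occs :: "'a form \<Rightarrow> 'a binders \<Rightarrow> ('a form \<times> 'a binders) set" where
  "occs TT c = {(TT, c)}" | "occs FF c = {(FF, c)}"
| "occs (Or p q) c = insert (Or p q, c) (occs p c \<union> occs q c)"
| "occs (And p q) c = insert (And p q, c) (occs p c \<union> occs q c)"
| "occs (Dia A p) c = insert (Dia A p, c) (occs p c)"
| "occs (Box A p) c = insert (Box A p, c) (occs p c)"
| "occs (Min x p) c = insert (Min x p, c) (occs p ((x, Min x p) # c))"
| "occs (Max x p) c = insert (Max x p, c) (occs p ((x, Max x p) # c))"
| "occs (FVar x) c = {(FVar x, c)}"

definition occ_sem :: "'a form \<times> 'a binders \<Rightarrow> 'a ftrace set" where
  "occ_sem = (\<lambda>(q, c). semF q (binder_env c))"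

lemma finite_occs: "finite (occs p c)"
  by (induction p arbitrary: c) auto

lemma occs_self: "(p, c) \<in> occs p c"
  by (cases p) auto

lemma occs_trans: "(q, c') \<in> occs p c \<Longrightarrow> occs q c' \<subseteq> occs p c"
  by (induction p arbitrary: c) auto

lemma guarded_in_antimono: "guarded_in S p \<Longrightarrow> S' \<subseteq> S \<Longrightarrow> guarded_in S' p"
  by (induction S p arbitrary: S' rule: guarded_in.induct) (auto, blast+)

lemma guarded_occs: "(q, c') \<in> occs p c \<Longrightarrow> guarded_in S p \<Longrightarrow> guarded_in {} q"
proof (induction p arbitrary: c S)
  case (Min x p)
  then show ?case using guarded_in_antimono by fastforce
next
  case (Max x p)
  then show ?case using guarded_in_antimono by fastforce
qed (auto intro: guarded_in_antimono)

lemma binder_occs: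
  "(q, c') \<in> occs p c \<Longrightarrow> c' = pre @ (x, b) # d \<Longrightarrow> (b, d) \<in> occs p c \<or> (\<exists>pre'. c = pre' @ (x, b) # d)"
proof (induction p arbitrary: c pre)
  case (Min y p)
  show ?case
  proof (cases "(q, c') = (Min y p, c)")
    case False
    with Min.prems have "(q, c') \<in> occs p ((y, Min y p) # c)" by auto
    from Min.IH[OF this Min.prems(2)] show ?thesis
      using occs_self[of "Min y p" c] by (auto simp: Cons_eq_append_conv)
  qed (use Min.prems in auto)
next
  case (Max y p)
  show ?case
  proof (cases "(q, c') = (Max y p, c)")
    case False
    with Max.prems have "(q, c') \<in> occs p ((y, Max y p) # c)" by auto
    from Max.IH[OF this Max.prems(2)] show ?thesis
      using occs_self[of "Max y p" c] by (auto simp: Cons_eq_append_conv)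
  qed (use Max.prems in auto)
qed auto

lemma binder_env_lookup:
  "binder_env c y = {} \<or> (\<exists>pre b d. c = pre @ (y, b) # d \<and> binder_env c y = semF b (binder_env d))"
proof (induction c)
  case (Cons e c)
  obtain x b where e: "e = (x, b)" by fastforce
  show ?case
  proof (cases "x = y")
    case True
    then show ?thesis using e by (intro disjI2 exI[of _ "[]"]) auto
  next
    case False
    then show ?thesis using Cons e by (auto, metis append_Cons)
  qed
qed simp

lemma binder_env_append: "y \<notin> fst ` set pre \<Longrightarrow> binder_env (pre @ c) y = binder_env c y"
  by (induction pre) auto

text \<open>The list pre collects the binders entered since the last modality. Guardedness keeps
  variables bound there out of reach, so a variable is looked up strictly inside c, where
  the hypothesis shorter applies.\<close>
lemma residual_semF_in_lattice_span:
  fixes W :: "('a form \<times> 'a binders) set"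
  assumes shorter: "\<And>q' c'. (q', c') \<in> W \<Longrightarrow> length c' < length c \<Longrightarrow> residual a (occ_sem (q', c')) \<in> lattice_span (occ_sem ` W)"
    and binders: "\<And>q' c' pre x b d. (q', c') \<in> W \<Longrightarrow> c' = pre @ (x, b) # d \<Longrightarrow> (b, d) \<in> W"
  shows "occs q (pre @ c) \<subseteq> W \<Longrightarrow> guarded_in S q \<Longrightarrow> fst ` set pre \<subseteq> S
     \<Longrightarrow> residual a (semF q (binder_env (pre @ c))) \<in> lattice_span (occ_sem ` W)"
proof (induction q arbitrary: pre S)
  case TT
  then show ?case by (simp add: residual_def UNIV_in_lattice_span)
next
  case FF
  then show ?case by (simp add: residual_def empty_in_lattice_span)
next
  case (Or p q)
  then show ?case by (auto simp: residual_Un intro!: Un_in_lattice_span Or.IH)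
next
  case (And p q)
  then show ?case by (auto simp: residual_Int intro!: Int_in_lattice_span And.IH)
next
  case (Dia A p)
  then have "semF p (binder_env (pre @ c)) \<in> occ_sem ` W"
    using occs_self[of p] by (force simp: occ_sem_def)
  then show ?case
    unfolding residual_Dia by (simp add: lattice_span_base empty_in_lattice_span)
next
  case (Box A p)
  then have "semF p (binder_env (pre @ c)) \<in> occ_sem ` W"
    using occs_self[of p] by (force simp: occ_sem_def)
  then show ?case
    unfolding residual_Box by (simp add: lattice_span_base UNIV_in_lattice_span)
next
  case (Min x p)
  have "residual a (semF p (binder_env (((x, Min x p) # pre) @ c))) \<in> lattice_span (occ_sem ` W)"
    using Min.prems by (intro Min.IH[where S = "insert x S"]) auto
  moreover have "semF (Min x p) (binder_env (pre @ c)) = semF p (binder_env (((x, Min x p) # pre) @ c))"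
    unfolding append_Cons binder_env.simps(2) by (rule semF_fixpoint_unfold(1))
  ultimately show ?case
    by simp
next
  case (Max x p)
  have "residual a (semF p (binder_env (((x, Max x p) # pre) @ c))) \<in> lattice_span (occ_sem ` W)"
    using Max.prems by (intro Max.IH[where S = "insert x S"]) auto
  moreover have "semF (Max x p) (binder_env (pre @ c)) = semF p (binder_env (((x, Max x p) # pre) @ c))"
    unfolding append_Cons binder_env.simps(2) by (rule semF_fixpoint_unfold(2))
  ultimately show ?case
    by simp
next
  case (FVar y)
  then have "y \<notin> fst ` set pre"
    by auto
  then have env_y: "semF (FVar y) (binder_env (pre @ c)) = binder_env c y"
    by (simp add: binder_env_append)
  from binder_env_lookup[of c y] show ?case
  proof (elim disjE exE conjE)
    assume "binder_env c y = {}"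
    then show ?thesis
      unfolding env_y by (simp add: residual_def empty_in_lattice_span)
  next
    fix pre' b d
    assume c: "c = pre' @ (y, b) # d" and b: "binder_env c y = semF b (binder_env d)"
    have "(b, d) \<in> W"
      using binders[of "FVar y" "pre @ c" "pre @ pre'" y b d] FVar.prems(1) c by simp
    moreover have "length d < length c"
      using c by simp
    ultimately have "residual a (occ_sem (b, d)) \<in> lattice_span (occ_sem ` W)"
      by (rule shorter)
    moreover have "semF (FVar y) (binder_env (pre @ c)) = occ_sem (b, d)"
      using env_y b by (simp add: occ_sem_def)
    ultimately show ?thesis
      by (simp only:)
  qed
qed

lemma residual_occ_sem_in_lattice_span:
  assumes "guarded \<phi>" and "w \<in> occs \<phi> []"
  shows "residual a (occ_sem w) \<in> lattice_span (occ_sem ` occs \<phi> [])"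
proof -
  define W where "W = occs \<phi> []"
  have binders: "(b, d) \<in> W" if "(q, c) \<in> W" and "c = pre @ (x, b) # d" for q c pre x b d
    using binder_occs[of q c \<phi> "[]" pre x b d] that unfolding W_def by simp
  have "residual a (occ_sem (q, c)) \<in> lattice_span (occ_sem ` W)" if "(q, c) \<in> W" for q c
    using that
  proof (induction "length c" arbitrary: q c rule: less_induct)
    case less
    have "residual a (semF q (binder_env ([] @ c))) \<in> lattice_span (occ_sem ` W)"
    proof (rule residual_semF_in_lattice_span[OF less.hyps binders])
      show "occs q ([] @ c) \<subseteq> W"
        using occs_trans less.prems unfolding W_def by simp
      show "guarded_in {} q"
        using guarded_occs less.prems assms(1) unfolding W_def guarded_def by blast
    qed auto
    then show ?case
      by (simp add: occ_sem_def)
  qed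
  then show ?thesis
    using assms(2) unfolding W_def by (cases w) blast
qed

lemma finite_residual_closed_family:
  assumes "guarded \<phi>"
  obtains Rs where "finite Rs" and "semC \<phi> \<in> Rs" and "\<And>R a. R \<in> Rs \<Longrightarrow> residual a R \<in> Rs"
proof -
  let ?B = "occ_sem ` occs \<phi> []"
  have "finite ?B"
    by (simp add: finite_occs)
  moreover have "semC \<phi> \<in> ?B"
    using occs_self by (force simp: semC_def occ_sem_def)
  moreover have "residual a X \<in> lattice_span ?B" if "X \<in> ?B" for X a
    using residual_occ_sem_in_lattice_span[OF assms] that by blast
  ultimately show thesis
    using that[of "lattice_span ?B"]
    by (simp add: finite_lattice_span lattice_span_base residual_in_lattice_span)
qed

lemma sHML_if_sound_viol_complete:
  fixes \<phi> :: "'a::finite form"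
  assumes "guarded \<phi>" and "sound m \<phi>" and "viol_complete m \<phi>"
  shows "\<exists>\<psi>. is_sHML \<psi> \<and> closed_form \<psi> \<and> guarded \<psi> \<and> semC \<psi> = semC \<phi>"
proof -
  obtain Rs where "finite Rs" and "semC \<phi> \<in> Rs" and "\<And>R a. R \<in> Rs \<Longrightarrow> residual a R \<in> Rs"
    using finite_residual_closed_family[OF assms(1)] by blast
  then show ?thesis
    using sHML_if_safety_finite_residuals safety_if_sound_viol_complete[OF assms(2,3)] by blast
qed

lemma cHML_if_sound_sat_complete:
  fixes \<phi> :: "'a::finite form"
  assumes "guarded \<phi>" and "sound m \<phi>" and "sat_complete m \<phi>"
  shows "\<exists>\<psi>. is_cHML \<psi> \<and> closed_form \<psi> \<and> guarded \<psi> \<and> semC \<psi> = semC \<phi>"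
proof -
  obtain Rs where Rs: "finite Rs" "semC \<phi> \<in> Rs" "\<And>R a. R \<in> Rs \<Longrightarrow> residual a R \<in> Rs"
    using finite_residual_closed_family[OF assms(1)] by blast
  have "\<exists>\<psi>. is_sHML \<psi> \<and> closed_form \<psi> \<and> guarded \<psi> \<and> semC \<psi> = - semC \<phi>"
  proof (rule sHML_if_safety_finite_residuals)
    show "finite (uminus ` Rs)"
      using Rs(1) by simp
    show "- semC \<phi> \<in> uminus ` Rs"
      using Rs(2) by simp
    show "residual a R \<in> uminus ` Rs" if "R \<in> uminus ` Rs" for R a
      using that Rs(3) by (auto simp: residual_Compl)
    show "safety (- semC \<phi>)"
      using assms(2,3) by (rule safety_Compl_if_sound_sat_complete)
  qed
  then obtain \<psi> where \<psi>: "is_sHML \<psi>" "closed_form \<psi>" "guarded \<psi>" "semC \<psi> = - semC \<phi>"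
    by blast
  have "semC (dual \<psi>) = semC \<phi>"
    using \<psi>(2,4) by (simp add: semC_dual)
  moreover have "is_cHML (dual \<psi>)" and "closed_form (dual \<psi>)" and "guarded (dual \<psi>)"
    using \<psi>(1-3) by (simp_all add: is_cHML_dual closed_form_def guarded_def)
  ultimately show ?thesis
    by blast
qed

theorem mainTheorem12:
  fixes \<phi> :: "'a::finite form"
  assumes "closed_form \<phi>" and "guarded \<phi>"
  shows "((\<exists>m. closed_mon m \<and> reactive m \<and> sound m \<phi> \<and> viol_complete m \<phi>)
           \<longrightarrow> (\<exists>\<psi>. is_sHML \<psi> \<and> closed_form \<psi> \<and> guarded \<psi> \<and> semC \<psi> = semC \<phi>))
       \<and> ((\<exists>m. closed_mon m \<and> reactive m \<and> sound m \<phi> \<and> sat_complete m \<phi>)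
           \<longrightarrow> (\<exists>\<psi>. is_cHML \<psi> \<and> closed_form \<psi> \<and> guarded \<psi> \<and> semC \<psi> = semC \<phi>))"
  using sHML_if_sound_viol_complete[OF assms(2)] cHML_if_sound_sat_complete[OF assms(2)] by blast

end
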